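(* A perfect Euler cuboid exists if and only if there exist integers $a,b,c,u$ with $c>0$, $0<u/c<1$ and $(a/c,\,b/c)\in D_{ab}$ satisfying the homogeneous Diophantine equation of degree $12$ $$\begin{aligned}&u^4a^4b^4+6a^4u^2b^4c^2-2u^4a^4b^2c^2-2u^4a^2b^4c^2+4u^2b^4a^2c^4+4a^4u^2b^2c^4-12u^4a^2b^2c^4\\&+u^4a^4c^4+u^4b^4c^4+a^4b^4c^4+6a^4u^2c^6+6u^2b^4c^6-8a^2b^2u^2c^6-2u^4a^2c^6-2u^4b^2c^6\\&-2a^4b^2c^6-2b^4a^2c^6+u^4c^8+b^4c^8+a^4c^8+4a^2u^2c^8+4b^2u^2c^8-12b^2a^2c^8\\&+6u^2c^{10}-2a^2c^{10}-2b^2c^{10}+c^{12}=0.\end{aligned}$$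
   Context: An Euler cuboid is a rectangular parallelepiped whose three edge lengths and three face diagonal lengths are all positive integers; a perfect Euler cuboid is an Euler cuboid whose space diagonal also has integer length, i.e. a $7$-tuple of positive integers $(a,b,c,\alpha,\beta,\gamma,d)$ with $a^2+b^2=\gamma^2$, $b^2+c^2=\alpha^2$, $c^2+a^2=\beta^2$, $a^2+b^2+c^2=d^2$ (these letters are unrelated to the integer unknowns $a,b,c,u$ of the claim). Let $D_{uz}=\{(u,z)\in\mathbb{R}^2: 0<u<1,\ 0<z<1\}$. Define $f\colon D_{uz}\to\mathbb{R}^2$ by $f(u,z)=(a(u,z),b(u,z))$, where $a(u,z)$ and $b(u,z)$ are the positive real numbers determined by $$a^2=\frac{u^2+z^2}{u^2z^2+1},\qquad b^2=\frac{(1+u^2)(1+z^2)-2z(1-u^2)}{(1+u^2)(1+z^2)+2z(1-u^2)}$$ (both right-hand sides are positive on $D_{uz}$), and let $D_{ab}=f(D_{uz})$. *)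

theory Defs
  imports Complex_Main
begin

definition perfect_euler_cuboid :: "nat \<Rightarrow> nat \<Rightarrow> nat \<Rightarrow> nat \<Rightarrow> nat \<Rightarrow> nat \<Rightarrow> nat \<Rightarrow> bool" where
  "perfect_euler_cuboid a b c \<alpha> \<beta> \<gamma> d \<longleftrightarrow>
     a > 0 \<and> b > 0 \<and> c > 0 \<and> \<alpha> > 0 \<and> \<beta> > 0 \<and> \<gamma> > 0 \<and> d > 0 \<and>
     a^2 + b^2 = \<gamma>^2 \<and> b^2 + c^2 = \<alpha>^2 \<and> c^2 + a^2 = \<beta>^2 \<and> a^2 + b^2 + c^2 = d^2"

definition D_uz :: "(real \<times> real) set" where
  "D_uz = {(u, z). 0 < u \<and> u < 1 \<and> 0 < z \<and> z < 1}"

definition f_a :: "real \<Rightarrow> real \<Rightarrow> real" where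
  "f_a u z = sqrt ((u^2 + z^2) / (u^2 * z^2 + 1))"

definition f_b :: "real \<Rightarrow> real \<Rightarrow> real" where
  "f_b u z = sqrt (((1 + u^2) * (1 + z^2) - 2 * z * (1 - u^2)) /
                   ((1 + u^2) * (1 + z^2) + 2 * z * (1 - u^2)))"

definition f_uz :: "real \<times> real \<Rightarrow> real \<times> real" where
  "f_uz p = (f_a (fst p) (snd p), f_b (fst p) (snd p))"

definition D_ab :: "(real \<times> real) set" where
  "D_ab = f_uz ` D_uz"

end

theory Submission imports Defs begin

(* A perfect Euler cuboid is made of four right triangles sharing the space diagonal d.
   Replacing each triangle by the tangent of its half angle (the rational parametrization
   t |-> ((1 - t^2)/(1 + t^2), 2t/(1 + t^2)) of the unit circle) turns the existence of a
   perfect cuboid into the existence of rational parameters a/c, b/c, u/c satisfying a single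
   homogeneous equation of degree 12, namely P^2 + Q^2 - G^2 = 0 for the three products
   P, Q, G of "cosine numerators" defined in cuboid_form. *)

(* The rational parametrization of the unit circle: for t = tan(theta/2),
   rcos t = cos theta and rsin t = sin theta. *)
definition rcos :: "real \<Rightarrow> real" where
  "rcos t = (1 - t^2) / (1 + t^2)"

definition rsin :: "real \<Rightarrow> real" where
  "rsin t = 2 * t / (1 + t^2)"

(* The inverse map: tan_half k is tan(theta/2) for the angle theta in (0, pi) with cos theta = k. *)
definition tan_half :: "real \<Rightarrow> real" where
  "tan_half k = sqrt ((1 - k) / (1 + k))"

lemma rcos_rsin_unit_interval:
  assumes "0 < t" "t < 1"
  shows "0 < rcos t \<and> rcos t < 1 \<and> 0 < rsin t \<and> rsin t < 1"
proof -
  have "t^2 < 1" using assms by (simp add: power_less_one_iff)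
  moreover have "2 * t < 1 + t^2"
  proof -
    have "0 < (1 - t)^2" using assms by simp
    then show ?thesis by (simp add: power2_diff)
  qed
  ultimately show ?thesis using assms unfolding rcos_def rsin_def by (simp add: add_pos_nonneg)
qed

lemma tan_half_rcos:
  assumes "0 \<le> t"
  shows "tan_half (rcos t) = t"
proof -
  have pos: "0 < 1 + t^2" by (simp add: add_pos_nonneg)
  have "(1 - rcos t) / (1 + rcos t) = t^2"
    using pos unfolding rcos_def by (simp add: field_simps)
  then show ?thesis using assms unfolding tan_half_def by simp
qed

lemma tan_half_unit_interval:
  assumes "0 < k" "k < 1"
  shows "0 < tan_half k \<and> tan_half k < 1"
  using assms unfolding tan_half_def by simp

(* In a right triangle with legs x, y and hypotenuse h, the half-angle tangent
   (h - x) / y of the angle opposite to y has cosine x / h and sine y / h. *)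
lemma half_angle_tangent:
  fixes x y h :: real
  assumes pyth: "x^2 + y^2 = h^2" and "0 < h" "0 < y"
  shows "rcos ((h - x) / y) = x / h" "rsin ((h - x) / y) = y / h"
proof -
  have ysq: "y^2 \<noteq> 0" using \<open>0 < y\<close> by simp
  have one_plus: "1 + ((h - x) / y)^2 = 2 * h * (h - x) / y^2"
  proof -
    have "y^2 + (h - x)^2 = 2 * h * (h - x)" using pyth by (simp add: algebra_simps power2_eq_square)
    then show ?thesis using ysq by (simp add: power_divide field_simps)
  qed
  have one_minus: "1 - ((h - x) / y)^2 = 2 * x * (h - x) / y^2"
  proof -
    have "y^2 - (h - x)^2 = 2 * x * (h - x)" using pyth by (simp add: algebra_simps power2_eq_square)
    then show ?thesis using ysq by (simp add: power_divide field_simps)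
  qed
  have hx: "h - x \<noteq> 0" using assms by auto
  have "rcos ((h - x) / y) = (2 * x * (h - x)) / (2 * h * (h - x))"
    unfolding rcos_def one_plus one_minus using ysq by simp
  then show "rcos ((h - x) / y) = x / h" using hx by simp
  have "rsin ((h - x) / y) = (2 * (h - x) * y) / (2 * h * (h - x))"
    unfolding rsin_def one_plus using ysq by (simp add: power2_eq_square)
  also have "\<dots> = (2 * y * (h - x)) / (2 * h * (h - x))" by (simp only: ac_simps)
  also have "\<dots> = y / h" using hx by simp
  finally show "rsin ((h - x) / y) = y / h" .
qed

lemma positive_half_tangent_unit_interval:
  fixes x y h :: real
  assumes pyth: "x^2 + y^2 = h^2" and "0 < x" "0 < y" "0 < h"
  shows "0 < (h - x) / y \<and> (h - x) / y < 1"
proof -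
  have "0 < y^2" "0 < 2 * x * y" using assms by simp_all
  then have "x^2 < h^2" "h^2 < (x + y)^2" using pyth by (linarith, simp add: power2_sum)
  then have "x < h" "h < x + y" using assms by (simp_all add: power_less_imp_less_base)
  then show ?thesis using assms by simp
qed

(* Reading the coordinates of f: both squares a^2, b^2 have the shape (1 - k) / (1 + k),
   with k the product of two rational cosines resp. a cosine and a sine. *)
lemma ratio_as_relative:
  fixes M N :: real
  assumes "N \<noteq> 0"
  shows "(N - M) / (N + M) = (1 - M / N) / (1 + M / N)"
proof -
  have "(1 - M / N) / (1 + M / N) = ((N - M) / N) / ((N + M) / N)"
    using assms by (simp add: diff_divide_distrib add_divide_distrib)
  also have "\<dots> = (N - M) / (N + M)" using assms by simp
  finally show ?thesis by simp
qed

lemma f_uz_tan_half: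
  "f_uz (u, z) = (tan_half (rcos u * rcos z), tan_half (rcos u * rsin z))"
proof -
  define N where "N = (1 + u^2) * (1 + z^2)"
  have "0 < 1 + u^2" "0 < 1 + z^2" by (simp_all add: add_pos_nonneg)
  then have "N \<noteq> 0" unfolding N_def by simp
  have a: "(u^2 + z^2) / (u^2 * z^2 + 1) = (1 - rcos u * rcos z) / (1 + rcos u * rcos z)"
  proof -
    define M where "M = (1 - u^2) * (1 - z^2)"
    have "rcos u * rcos z = M / N" unfolding rcos_def M_def N_def by simp
    moreover have NM: "N - M = 2 * (u^2 + z^2)" "N + M = 2 * (u^2 * z^2 + 1)"
      unfolding M_def N_def by (simp_all add: algebra_simps)
    then have "(N - M) / (N + M) = (u^2 + z^2) / (u^2 * z^2 + 1)"
      by (metis nonzero_mult_divide_mult_cancel_left zero_neq_numeral)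
    ultimately show ?thesis using ratio_as_relative[OF \<open>N \<noteq> 0\<close>] by simp
  qed
  define M where "M = 2 * z * (1 - u^2)"
  have "rcos u * rsin z = M / N" unfolding rcos_def rsin_def M_def N_def by simp
  then have b: "(N - M) / (N + M) = (1 - rcos u * rsin z) / (1 + rcos u * rsin z)"
    using ratio_as_relative[OF \<open>N \<noteq> 0\<close>] by simp
  show ?thesis
    using a b unfolding f_uz_def f_a_def f_b_def tan_half_def M_def N_def by simp
qed

lemma D_ab_unit_square:
  assumes "(a, b) \<in> D_ab"
  shows "0 < a \<and> a < 1 \<and> 0 < b \<and> b < 1"
proof -
  obtain u z where uz: "0 < u" "u < 1" "0 < z" "z < 1" and ab: "(a, b) = f_uz (u, z)"
    using assms unfolding D_ab_def D_uz_def by auto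
  have "0 < rcos u * rcos z \<and> rcos u * rcos z < 1 \<and> 0 < rcos u * rsin z \<and> rcos u * rsin z < 1"
    using rcos_rsin_unit_interval[OF uz(1,2)] rcos_rsin_unit_interval[OF uz(3,4)]
    using mult_strict_mono[of "rcos u" 1 _ 1] by auto
  then show ?thesis using ab tan_half_unit_interval unfolding f_uz_tan_half by auto
qed

definition cuboid_relations :: "'a::comm_semiring_1 \<Rightarrow> 'a \<Rightarrow> 'a \<Rightarrow> 'a \<Rightarrow> 'a \<Rightarrow> 'a \<Rightarrow> 'a \<Rightarrow> bool" where
  "cuboid_relations a b c \<alpha> \<beta> \<gamma> d \<longleftrightarrow>
     a^2 + b^2 = \<gamma>^2 \<and> b^2 + c^2 = \<alpha>^2 \<and> c^2 + a^2 = \<beta>^2 \<and> a^2 + b^2 + c^2 = d^2"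

lemma cuboid_relations_of_nat:
  "cuboid_relations (of_nat a :: 'a::{comm_semiring_1, semiring_char_0}) (of_nat b) (of_nat c)
     (of_nat \<alpha>) (of_nat \<beta>) (of_nat \<gamma>) (of_nat d) \<longleftrightarrow> cuboid_relations a b c \<alpha> \<beta> \<gamma> d"
  unfolding cuboid_relations_def by (simp only: of_nat_add[symmetric] of_nat_power[symmetric] of_nat_eq_iff)

lemma perfect_euler_cuboid_iff:
  "perfect_euler_cuboid a b c \<alpha> \<beta> \<gamma> d \<longleftrightarrow>
     0 < a \<and> 0 < b \<and> 0 < c \<and> 0 < \<alpha> \<and> 0 < \<beta> \<and> 0 < \<gamma> \<and> 0 < d \<and>
     cuboid_relations a b c \<alpha> \<beta> \<gamma> d"
  unfolding perfect_euler_cuboid_def cuboid_relations_def by auto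

lemma cuboid_relations_iff_triangles:
  fixes p q r \<alpha> \<beta> \<gamma> d :: "'a::comm_ring_1"
  shows "cuboid_relations p q r \<alpha> \<beta> \<gamma> d \<longleftrightarrow>
    p^2 + q^2 = \<gamma>^2 \<and> \<gamma>^2 + r^2 = d^2 \<and> p^2 + \<alpha>^2 = d^2 \<and> q^2 + \<beta>^2 = d^2"
proof
  assume "cuboid_relations p q r \<alpha> \<beta> \<gamma> d"
  then show "p^2 + q^2 = \<gamma>^2 \<and> \<gamma>^2 + r^2 = d^2 \<and> p^2 + \<alpha>^2 = d^2 \<and> q^2 + \<beta>^2 = d^2"
    unfolding cuboid_relations_def by (metis add.assoc add.commute)
next
  assume "p^2 + q^2 = \<gamma>^2 \<and> \<gamma>^2 + r^2 = d^2 \<and> p^2 + \<alpha>^2 = d^2 \<and> q^2 + \<beta>^2 = d^2"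
  then have face: "p^2 + q^2 = \<gamma>^2" and "\<gamma>^2 + r^2 = d^2"
    and diag_\<alpha>: "p^2 + \<alpha>^2 = d^2" and diag_\<beta>: "q^2 + \<beta>^2 = d^2" by simp_all
  then have space: "p^2 + q^2 + r^2 = d^2" by simp
  have "p^2 + (q^2 + r^2) = p^2 + \<alpha>^2" using space diag_\<alpha> by (metis add.assoc)
  moreover have "q^2 + (r^2 + p^2) = q^2 + \<beta>^2" using space diag_\<beta> by (metis add.assoc add.commute)
  ultimately show "cuboid_relations p q r \<alpha> \<beta> \<gamma> d"
    using face space unfolding cuboid_relations_def by simp
qed

(* The parameters are u, the half-angle tangent of
   (gamma, c, d), and z, that of (a, b, gamma); then cos = (gamma/d)(a/gamma) = a/d. *)
lemma cuboid_half_tangents_in_D_ab: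
  fixes p q r \<alpha> \<beta> \<gamma> d :: real
  assumes pos: "0 < p" "0 < q" "0 < r" "0 < \<alpha>" "0 < \<beta>" "0 < \<gamma>" "0 < d"
    and rel: "cuboid_relations p q r \<alpha> \<beta> \<gamma> d"
  shows "((d - p) / \<alpha>, (d - q) / \<beta>) \<in> D_ab"
proof -
  have face: "p^2 + q^2 = \<gamma>^2" and space: "\<gamma>^2 + r^2 = d^2"
    and diag_\<alpha>: "p^2 + \<alpha>^2 = d^2" and diag_\<beta>: "q^2 + \<beta>^2 = d^2"
    using rel unfolding cuboid_relations_iff_triangles by simp_all
  define u where "u = (d - \<gamma>) / r"
  define z where "z = (\<gamma> - p) / q"
  have "(u, z) \<in> D_uz"
    using positive_half_tangent_unit_interval[OF space] positive_half_tangent_unit_interval[OF face] pos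
    unfolding D_uz_def u_def z_def by simp
  have "rcos u = \<gamma> / d" "rcos z = p / \<gamma>" "rsin z = q / \<gamma>"
    using half_angle_tangent[OF space] half_angle_tangent[OF face] pos unfolding u_def z_def by simp_all
  then have "rcos u * rcos z = p / d" "rcos u * rsin z = q / d" using pos by simp_all
  moreover have "rcos ((d - p) / \<alpha>) = p / d" "rcos ((d - q) / \<beta>) = q / d"
    using half_angle_tangent(1)[OF diag_\<alpha>] half_angle_tangent(1)[OF diag_\<beta>] pos by simp_all
  moreover have "0 \<le> (d - p) / \<alpha>" "0 \<le> (d - q) / \<beta>"
    using positive_half_tangent_unit_interval[OF diag_\<alpha>] positive_half_tangent_unit_interval[OF diag_\<beta>] pos
    by simp_all
  ultimately have "f_uz (u, z) = ((d - p) / \<alpha>, (d - q) / \<beta>)"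
    unfolding f_uz_tan_half by (metis tan_half_rcos)
  then show ?thesis using \<open>(u, z) \<in> D_uz\<close> unfolding D_ab_def by (metis image_eqI)
qed

(* The degree-12 form of the theorem, in factored shape P^2 + Q^2 - G^2.  After the
   substitution x = c * tan(theta_x / 2) each factor becomes a cosine up to a common factor,
   so the form vanishes iff cos(theta_a)^2 + cos(theta_b)^2 = cos(theta_u)^2. *)
definition cuboid_form :: "'a::comm_ring_1 \<Rightarrow> 'a \<Rightarrow> 'a \<Rightarrow> 'a \<Rightarrow> 'a" where
  "cuboid_form a b c u =
     ((c^2 - a^2) * (c^2 + b^2) * (c^2 + u^2))^2 + ((c^2 - b^2) * (c^2 + a^2) * (c^2 + u^2))^2
     - ((c^2 - u^2) * (c^2 + a^2) * (c^2 + b^2))^2"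

lemma cuboid_form_expanded:
  fixes a b c u :: int
  shows "u^4*a^4*b^4 + 6*a^4*u^2*b^4*c^2 - 2*u^4*a^4*b^2*c^2 - 2*u^4*a^2*b^4*c^2
       + 4*u^2*b^4*a^2*c^4 + 4*a^4*u^2*b^2*c^4 - 12*u^4*a^2*b^2*c^4
       + u^4*a^4*c^4 + u^4*b^4*c^4 + a^4*b^4*c^4 + 6*a^4*u^2*c^6 + 6*u^2*b^4*c^6
       - 8*a^2*b^2*u^2*c^6 - 2*u^4*a^2*c^6 - 2*u^4*b^2*c^6
       - 2*a^4*b^2*c^6 - 2*b^4*a^2*c^6 + u^4*c^8 + b^4*c^8 + a^4*c^8
       + 4*a^2*u^2*c^8 + 4*b^2*u^2*c^8 - 12*b^2*a^2*c^8
       + 6*u^2*c^10 - 2*a^2*c^10 - 2*b^2*c^10 + c^12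
     = cuboid_form a b c u"
  unfolding cuboid_form_def by algebra

lemma cuboid_form_of_int:
  "of_int (cuboid_form a b c u) = (cuboid_form (of_int a) (of_int b) (of_int c) (of_int u) :: 'a::comm_ring_1)"
  unfolding cuboid_form_def by simp

lemma cuboid_form_homogeneous:
  fixes a b c u s :: "'a::comm_ring_1"
  shows "cuboid_form (s * a) (s * b) (s * c) (s * u) = s^12 * cuboid_form a b c u"
proof -
  have sq: "\<And>x y. (s * x)^2 - (s * y)^2 = s^2 * (x^2 - y^2)" "\<And>x y. (s * x)^2 + (s * y)^2 = s^2 * (x^2 + y^2)"
    by (simp_all add: power_mult_distrib algebra_simps)
  have cube: "\<And>x y z. (s^2 * x * (s^2 * y) * (s^2 * z))^2 = s^12 * (x * y * z)^2"
    by (simp add: power_mult_distrib ac_simps power_add[symmetric] power_mult[symmetric])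
  show ?thesis unfolding cuboid_form_def sq cube by (simp only: distrib_left right_diff_distrib)
qed

lemma cuboid_form_rcos:
  fixes a b u :: real
  shows "cuboid_form a b 1 u =
    ((1 + a^2) * (1 + b^2) * (1 + u^2))^2 * ((rcos a)^2 + (rcos b)^2 - (rcos u)^2)"
proof -
  have "0 < 1 + a^2" "0 < 1 + b^2" "0 < 1 + u^2" by (simp_all add: add_pos_nonneg)
  then have "1 - a^2 = rcos a * (1 + a^2)" "1 - b^2 = rcos b * (1 + b^2)" "1 - u^2 = rcos u * (1 + u^2)"
    unfolding rcos_def by simp_all
  then show ?thesis unfolding cuboid_form_def power_one by algebra
qed

(* Forward direction, algebraic part: the three half-angle tangents of a cuboid annihilate the
   form, because their cosines a/d, b/d, gamma/d satisfy a^2 + b^2 = gamma^2. *)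
lemma cuboid_half_tangents_form_zero:
  fixes p q r \<alpha> \<beta> \<gamma> d :: real
  assumes pos: "0 < r" "0 < \<alpha>" "0 < \<beta>" "0 < d"
    and rel: "cuboid_relations p q r \<alpha> \<beta> \<gamma> d"
  shows "cuboid_form ((d - p) / \<alpha>) ((d - q) / \<beta>) 1 ((d - \<gamma>) / r) = 0"
proof -
  have face: "p^2 + q^2 = \<gamma>^2" and space: "\<gamma>^2 + r^2 = d^2"
    and diag_\<alpha>: "p^2 + \<alpha>^2 = d^2" and diag_\<beta>: "q^2 + \<beta>^2 = d^2"
    using rel unfolding cuboid_relations_iff_triangles by simp_all
  have "rcos ((d - p) / \<alpha>) = p / d" "rcos ((d - q) / \<beta>) = q / d" "rcos ((d - \<gamma>) / r) = \<gamma> / d"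
    using half_angle_tangent(1)[OF diag_\<alpha>] half_angle_tangent(1)[OF diag_\<beta>]
      half_angle_tangent(1)[OF space] pos
    by simp_all
  moreover have "(p / d)^2 + (q / d)^2 - (\<gamma> / d)^2 = 0"
    using face by (simp add: power_divide add_divide_distrib[symmetric])
  ultimately show ?thesis unfolding cuboid_form_rcos by simp
qed

(* Backward direction: Euclid's parametrization of Pythagorean triples turns any zero of
   the form into seven quantities satisfying the cuboid relations. *)
lemma euclid_parametrization:
  fixes c x :: "'a::comm_ring_1"
  shows "(c^2 - x^2)^2 + (2 * x * c)^2 = (c^2 + x^2)^2"
  by (simp add: algebra_simps power2_eq_square)

lemma scaled_pythagorean:
  fixes x y z k :: "'a::comm_semiring_1"
  assumes "x^2 + y^2 = z^2"
  shows "(x * k)^2 + (y * k)^2 = (z * k)^2"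
  using assms by (simp add: power_mult_distrib flip: distrib_right)

lemma cuboid_relations_from_form:
  fixes a b c u :: "'a::comm_ring_1"
  assumes "cuboid_form a b c u = 0"
  shows "cuboid_relations
     ((c^2 - a^2) * (c^2 + b^2) * (c^2 + u^2)) ((c^2 - b^2) * (c^2 + a^2) * (c^2 + u^2))
     (2 * u * c * (c^2 + a^2) * (c^2 + b^2))
     (2 * a * c * (c^2 + b^2) * (c^2 + u^2)) (2 * b * c * (c^2 + a^2) * (c^2 + u^2))
     ((c^2 - u^2) * (c^2 + a^2) * (c^2 + b^2)) ((c^2 + a^2) * (c^2 + b^2) * (c^2 + u^2))"
    (is "cuboid_relations ?p ?q ?r ?\<alpha> ?\<beta> ?\<gamma> ?d")
proof -
  have face: "?p^2 + ?q^2 = ?\<gamma>^2" using assms unfolding cuboid_form_def by simp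
  have "?\<gamma>^2 + ?r^2 = ?d^2"
    using scaled_pythagorean[OF euclid_parametrization[of c u], of "(c^2 + a^2) * (c^2 + b^2)"]
    by (simp only: ac_simps)
  moreover have "?p^2 + ?\<alpha>^2 = ?d^2"
    using scaled_pythagorean[OF euclid_parametrization[of c a], of "(c^2 + b^2) * (c^2 + u^2)"]
    by (simp only: ac_simps)
  moreover have "?q^2 + ?\<beta>^2 = ?d^2"
    using scaled_pythagorean[OF euclid_parametrization[of c b], of "(c^2 + a^2) * (c^2 + u^2)"]
    by (simp only: ac_simps)
  ultimately show ?thesis using face unfolding cuboid_relations_iff_triangles by simp
qed

lemma perfect_euler_cuboid_of_int:
  fixes p q r \<alpha> \<beta> \<gamma> d :: int
  assumes "0 < p" "0 < q" "0 < r" "0 < \<alpha>" "0 < \<beta>" "0 < \<gamma>" "0 < d"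
    and "cuboid_relations p q r \<alpha> \<beta> \<gamma> d"
  shows "perfect_euler_cuboid (nat p) (nat q) (nat r) (nat \<alpha>) (nat \<beta>) (nat \<gamma>) (nat d)"
  using assms cuboid_relations_of_nat[where 'a = int, of "nat p" "nat q" "nat r" "nat \<alpha>" "nat \<beta>" "nat \<gamma>" "nat d"]
  by (simp add: perfect_euler_cuboid_iff)

lemma cuboid_of_form_zero:
  fixes a b c u :: int
  assumes "0 < a" "a < c" "0 < b" "b < c" "0 < u" "u < c" and form: "cuboid_form a b c u = 0"
  shows "\<exists>p q r \<alpha> \<beta> \<gamma> d. perfect_euler_cuboid p q r \<alpha> \<beta> \<gamma> d"
proof -
  have "0 < c^2 - x^2" if "0 < x" "x < c" for x
    using that power_strict_mono[of x c 2] by simp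
  then have "0 < c^2 - a^2" "0 < c^2 - b^2" "0 < c^2 - u^2" using assms by simp_all
  moreover have "0 < c^2 + x^2" for x using \<open>0 < a\<close> \<open>a < c\<close> by (simp add: add_pos_nonneg)
  ultimately have "perfect_euler_cuboid
     (nat ((c^2 - a^2) * (c^2 + b^2) * (c^2 + u^2))) (nat ((c^2 - b^2) * (c^2 + a^2) * (c^2 + u^2)))
     (nat (2 * u * c * (c^2 + a^2) * (c^2 + b^2)))
     (nat (2 * a * c * (c^2 + b^2) * (c^2 + u^2))) (nat (2 * b * c * (c^2 + a^2) * (c^2 + u^2)))
     (nat ((c^2 - u^2) * (c^2 + a^2) * (c^2 + b^2))) (nat ((c^2 + a^2) * (c^2 + b^2) * (c^2 + u^2)))"
    using assms by (intro perfect_euler_cuboid_of_int cuboid_relations_from_form) (simp_all add: mult_pos_pos)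
  then show ?thesis by blast
qed

(* A perfect cuboid yields the integer point obtained by clearing the denominator
   alpha * beta * c of the three half-angle tangents. *)
lemma rational_point_of_cuboid:
  assumes "perfect_euler_cuboid p q r \<alpha> \<beta> \<gamma> d"
  shows "\<exists>a b c u :: int. 0 < c \<and> 0 < real_of_int u / real_of_int c \<and> real_of_int u / real_of_int c < 1 \<and>
    (real_of_int a / real_of_int c, real_of_int b / real_of_int c) \<in> D_ab \<and> cuboid_form a b c u = 0"
proof -
  have pos: "0 < real p" "0 < real q" "0 < real r" "0 < real \<alpha>" "0 < real \<beta>" "0 < real \<gamma>" "0 < real d"
    and rel: "cuboid_relations (real p) (real q) (real r) (real \<alpha>) (real \<beta>) (real \<gamma>) (real d)"
    using assms cuboid_relations_of_nat[where 'a = real] unfolding perfect_euler_cuboid_iff by auto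
  define A where "A = (real d - real p) / real \<alpha>"
  define B where "B = (real d - real q) / real \<beta>"
  define U where "U = (real d - real \<gamma>) / real r"
  define c where "c = int \<alpha> * int \<beta> * int r"
  define a where "a = (int d - int p) * int \<beta> * int r"
  define b where "b = (int d - int q) * int \<alpha> * int r"
  define u where "u = (int d - int \<gamma>) * int \<alpha> * int \<beta>"
  have "0 < c" unfolding c_def using pos by simp
  have scaled: "real_of_int a = real_of_int c * A" "real_of_int b = real_of_int c * B"
    "real_of_int u = real_of_int c * U"
    unfolding A_def B_def U_def a_def b_def c_def u_def using pos by simp_all
  then have quotients: "real_of_int a / real_of_int c = A" "real_of_int b / real_of_int c = B"
    "real_of_int u / real_of_int c = U"
    using \<open>0 < c\<close> by simp_all
  have "0 < U \<and> U < 1"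
    using positive_half_tangent_unit_interval rel pos
    unfolding U_def cuboid_relations_iff_triangles by blast
  moreover have "(A, B) \<in> D_ab"
    unfolding A_def B_def by (rule cuboid_half_tangents_in_D_ab[OF pos rel])
  moreover have "cuboid_form a b c u = 0"
  proof -
    have "cuboid_form A B 1 U = 0"
      unfolding A_def B_def U_def using cuboid_half_tangents_form_zero[OF pos(3,4,5,7) rel] .
    then have "cuboid_form (real_of_int c * A) (real_of_int c * B) (real_of_int c * 1) (real_of_int c * U) = 0"
      unfolding cuboid_form_homogeneous by simp
    then show ?thesis unfolding scaled[symmetric] of_int_eq_0_iff[symmetric, where 'a = real]
      by (simp only: cuboid_form_of_int mult_1_right)
  qed
  ultimately show ?thesis using \<open>0 < c\<close> unfolding quotients[symmetric] by blast
qed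

lemma int_quotient_unit_interval:
  fixes x c :: int
  assumes "0 < c"
  shows "0 < real_of_int x / real_of_int c \<and> real_of_int x / real_of_int c < 1 \<longleftrightarrow> 0 < x \<and> x < c"
  using assms by (simp add: zero_less_divide_iff divide_less_eq)

lemma cuboid_of_rational_point:
  fixes a b c u :: int
  assumes "0 < c" "0 < real_of_int u / real_of_int c" "real_of_int u / real_of_int c < 1"
    and "(real_of_int a / real_of_int c, real_of_int b / real_of_int c) \<in> D_ab"
    and "cuboid_form a b c u = 0"
  shows "\<exists>p q r \<alpha> \<beta> \<gamma> d. perfect_euler_cuboid p q r \<alpha> \<beta> \<gamma> d"
proof (rule cuboid_of_form_zero)
  show "0 < a" "a < c" "0 < b" "b < c" "0 < u" "u < c"
    using assms D_ab_unit_square int_quotient_unit_interval[OF \<open>0 < c\<close>] by blast+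
qed fact

theorem theorem5p3:
  shows "(\<exists>a b c \<alpha> \<beta> \<gamma> d. perfect_euler_cuboid a b c \<alpha> \<beta> \<gamma> d) \<longleftrightarrow>
    (\<exists>a b c u :: int. c > 0 \<and> 0 < real_of_int u / real_of_int c \<and> real_of_int u / real_of_int c < 1 \<and>
       (real_of_int a / real_of_int c, real_of_int b / real_of_int c) \<in> D_ab \<and>
       u^4*a^4*b^4 + 6*a^4*u^2*b^4*c^2 - 2*u^4*a^4*b^2*c^2 - 2*u^4*a^2*b^4*c^2
       + 4*u^2*b^4*a^2*c^4 + 4*a^4*u^2*b^2*c^4 - 12*u^4*a^2*b^2*c^4
       + u^4*a^4*c^4 + u^4*b^4*c^4 + a^4*b^4*c^4 + 6*a^4*u^2*c^6 + 6*u^2*b^4*c^6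
       - 8*a^2*b^2*u^2*c^6 - 2*u^4*a^2*c^6 - 2*u^4*b^2*c^6
       - 2*a^4*b^2*c^6 - 2*b^4*a^2*c^6 + u^4*c^8 + b^4*c^8 + a^4*c^8
       + 4*a^2*u^2*c^8 + 4*b^2*u^2*c^8 - 12*b^2*a^2*c^8
       + 6*u^2*c^10 - 2*a^2*c^10 - 2*b^2*c^10 + c^12 = 0)"
  unfolding cuboid_form_expanded using rational_point_of_cuboid cuboid_of_rational_point by blast

end
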